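(* Let $m\geq 0$ and $k\geq 1$ be integers and let $n$ be a nonnegative integer with $n<t(m+1,k)$, where \[ t(s,k)= s\left(\left\lfloor \frac{s}{k}\right\rfloor +1\right)k-\binom{\lfloor s/k\rfloor +1}{2}k^2 . \] Then $b(n,k)\leq m$.
   Context: For a cell $u$ of the Young diagram of a partition $\lambda$, the hook length of $u$ is the number of cells $v$ of the diagram with $v=u$, or $v$ below $u$ in the same column, or $v$ to the right of $u$ in the same row. $\alpha_k(\lambda)$ is the number of cells of the Young diagram of $\lambda$ with hook length exactly $k$. $P(n)$ is the set of partitions of $n$ (with $P(0)$ containing only the empty partition), and $b(n,k)=\max\{\alpha_k(\lambda)\colon\lambda\in P(n)\}$. *)

theory Defs
  imports Main
begin

definition is_partition_of :: "nat \<Rightarrow> nat list \<Rightarrow> bool" where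
  "is_partition_of n lam \<longleftrightarrow> sorted_wrt (\<ge>) lam \<and> 0 \<notin> set lam \<and> sum_list lam = n"

definition partitions_of :: "nat \<Rightarrow> nat list set" where
  "partitions_of n = {lam. is_partition_of n lam}"

text \<open>Young diagram (English convention): cell (i,j) = row i, column j, 0-indexed.\<close>
definition young_diagram :: "nat list \<Rightarrow> (nat \<times> nat) set" where
  "young_diagram lam = {(i, j). i < length lam \<and> j < lam ! i}"

definition hook_length :: "nat list \<Rightarrow> nat \<times> nat \<Rightarrow> nat" where
  "hook_length lam u = card {v \<in> young_diagram lam.
      v = u \<or> (snd v = snd u \<and> fst v > fst u) \<or> (fst v = fst u \<and> snd v > snd u)}"

definition alpha :: "nat \<Rightarrow> nat list \<Rightarrow> nat" where
  "alpha k lam = card {u \<in> young_diagram lam. hook_length lam u = k}"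

definition b :: "nat \<Rightarrow> nat \<Rightarrow> nat" where
  "b n k = Max (alpha k ` partitions_of n)"

definition t :: "nat \<Rightarrow> nat \<Rightarrow> int" where
  "t s k = int s * (int (s div k) + 1) * int k - int ((s div k + 1) choose 2) * (int k)^2"

end

theory Submission
  imports Defs "HOL-Combinatorics.Transposition"
begin

text \<open>
  Encode a partition \<open>\<lambda>\<close> with \<open>\<ell>\<close> parts by its beta-set \<open>B = {\<lambda>\<^sub>i + \<ell> - 1 - i}\<close> of
  first-column hook lengths, so that \<open>|B| = \<ell>\<close> and \<open>\<Sum>B = n + (0 + 1 + \<dots> + (\<ell> - 1))\<close>.
  A cell of hook length \<open>k\<close> in row \<open>i\<close> yields a bead \<open>\<beta>\<^sub>i \<in> B\<close> with \<open>\<beta>\<^sub>i - k \<notin> B\<close>, and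
  distinct cells yield distinct beads. Call \<open>(y, x)\<close> a mod-\<open>k\<close> inversion of \<open>B\<close> if \<open>y < x\<close>,
  \<open>x \<in> B\<close>, \<open>y \<notin> B\<close> and \<open>y \<equiv> x (mod k)\<close>. Sliding a bead from \<open>x\<close> to an empty position
  \<open>x - k\<close> lowers \<open>\<Sum>B\<close> by \<open>k\<close> and destroys at most one such inversion, so \<open>k\<close> times
  their number is at most \<open>n\<close>. Every pair \<open>a \<le> b\<close> of movable beads in a common residue
  class gives the inversion \<open>(a - k, b)\<close>, and by pigeonhole \<open>s\<close> numbers contain at least
  \<open>(\<Sum>i<s. i div k + 1) = t(s,k)/k\<close> such pairs. Hence \<open>t(\<alpha>\<^sub>k(\<lambda>), k) \<le> n\<close>, and \<open>t(\<cdot>,k)\<close>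
  is increasing.
\<close>

section \<open>Beads and mod-\<open>k\<close> inversions\<close>

lemma mod_eq_less_imp_add_le:
  fixes y x k :: nat
  assumes "y mod k = x mod k" "y < x"
  shows "y + k \<le> x"
proof -
  obtain d where d: "x - y = k * d"
    using assms by (metis mod_eq_dvd_iff_nat less_imp_le dvdE)
  then have "d \<noteq> 0" using assms(2) by (metis mult_0_right zero_less_diff less_irrefl)
  then have "k \<le> x - y" using d by simp
  then show ?thesis using assms(2) by linarith
qed

lemma sum_lessThan_card_le_Sum:
  fixes B :: "nat set"
  assumes "finite B"
  shows "(\<Sum>i<card B. i) \<le> \<Sum>B"
  using assms
proof (induction "card B" arbitrary: B)
  case 0
  then show ?case by simp
next
  case (Suc c)
  define M where "M = Max B"
  have "B \<noteq> {}" using Suc.hyps(2) by auto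
  then have M: "M \<in> B" using Suc.prems by (simp add: M_def)
  have "card B \<le> card {..M}"
    using Suc.prems by (intro card_mono) (auto simp: M_def)
  then have "c \<le> M" using Suc.hyps(2) by simp
  have "(\<Sum>i<c. i) \<le> \<Sum>(B - {M})"
    using Suc.hyps Suc.prems M by (metis card_Diff_singleton diff_Suc_1 finite_Diff)
  moreover have "\<Sum>B = M + \<Sum>(B - {M})"
    using Suc.prems M by (simp add: sum.remove)
  ultimately show ?case using \<open>c \<le> M\<close> Suc.hyps(2)[symmetric] by simp
qed

definition mod_inversions :: "nat \<Rightarrow> nat set \<Rightarrow> (nat \<times> nat) set" where
  "mod_inversions k B = {(y, x). y < x \<and> x \<in> B \<and> y \<notin> B \<and> y mod k = x mod k}"

definition movable_beads :: "nat \<Rightarrow> nat set \<Rightarrow> nat set" where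
  "movable_beads k B = {x \<in> B. k \<le> x \<and> x - k \<notin> B}"

lemma finite_mod_inversions:
  assumes "finite B"
  shows "finite (mod_inversions k B)"
proof (rule finite_subset)
  show "mod_inversions k B \<subseteq> {..Max B} \<times> {..Max B}"
    using assms by (auto simp: mod_inversions_def intro: less_imp_le order.trans[OF _ Max_ge])
qed simp

lemma transpose_class_neighbours_less:
  fixes x y z k :: nat
  assumes "y < z" "y mod k = z mod k" "(y, z) \<noteq> (x - k, x)" "k \<le> x"
  shows "transpose (x - k) x y < transpose (x - k) x z"
proof -
  have same_class: "(x - k) mod k = x mod k" using assms(4) by (simp add: le_mod_geq)
  consider "y = x - k" | "y = x" | "z = x" | "z = x - k" | "y \<notin> {x - k, x}" "z \<notin> {x - k, x}"
    by blast
  then show ?thesis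
  proof cases
    case 1
    with assms same_class have "z \<noteq> x" "z mod k = x mod k" by auto
    then have "x < z" using assms(1) 1 mod_eq_less_imp_add_le[of z k x] by fastforce
    then show ?thesis using 1 by (simp add: transpose_def)
  next
    case 2
    then show ?thesis using assms(1) by (auto simp: transpose_def)
  next
    case 3
    with assms have "y \<noteq> x - k" by auto
    moreover have "y + k \<le> x" using assms 3 mod_eq_less_imp_add_le[of y k x] by simp
    ultimately show ?thesis using 3 assms(1) by (auto simp: transpose_def)
  next
    case 4
    then show ?thesis using assms(1) by (auto simp: transpose_def)
  next
    case 5
    then show ?thesis using assms(1) by (simp add: transpose_def)
  qed
qed

lemma movable_bead_if_mod_inversion:
  assumes "(y, z) \<in> mod_inversions k B" "0 < k"
  obtains x where "x \<in> movable_beads k B"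
proof -
  define P where "P w \<longleftrightarrow> w \<in> B \<and> y < w \<and> w mod k = y mod k" for w
  have "P z" using assms(1) by (simp add: P_def mod_inversions_def)
  define x where "x = (LEAST w. P w)"
  have Px: "P x" using LeastI[of P z] \<open>P z\<close> by (simp add: x_def)
  then have "y + k \<le> x" using mod_eq_less_imp_add_le[of y k x] by (simp add: P_def)
  have "x - k \<notin> B"
  proof
    assume "x - k \<in> B"
    moreover have "x - k \<noteq> y" using calculation assms(1) by (auto simp: mod_inversions_def)
    moreover have "(x - k) mod k = y mod k" using Px \<open>y + k \<le> x\<close> by (simp add: P_def le_mod_geq)
    ultimately have "P (x - k)" using \<open>y + k \<le> x\<close> by (simp add: P_def)
    then have "x \<le> x - k" by (simp add: x_def Least_le)
    then show False using assms(2) Px \<open>y + k \<le> x\<close> by (simp add: P_def)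
  qed
  moreover have "k \<le> x" using \<open>y + k \<le> x\<close> by simp
  ultimately show thesis using that[of x] Px by (simp add: P_def movable_beads_def)
qed

lemma card_mod_inversions_move_bead:
  assumes fin: "finite B" and x: "x \<in> movable_beads k B"
  shows "card (mod_inversions k B) \<le> card (mod_inversions k (insert (x - k) (B - {x}))) + 1"
proof -
  define B' where "B' = insert (x - k) (B - {x})"
  txt \<open>The move is the transposition of two neighbours in a residue class, which preserves
    the order of every other pair in that class.\<close>
  define \<sigma> where "\<sigma> = transpose (x - k) x"
  have x: "x \<in> B" "k \<le> x" "x - k \<notin> B" using x by (auto simp: movable_beads_def)
  have mem: "\<sigma> w \<in> B' \<longleftrightarrow> w \<in> B" for w
    using x by (auto simp: \<sigma>_def B'_def transpose_def)
  have same_class: "\<sigma> w mod k = w mod k" for w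
    using x by (simp add: \<sigma>_def transpose_def le_mod_geq)
  let ?R = "mod_inversions k B - {(x - k, x)}"
  have "map_prod \<sigma> \<sigma> ` ?R \<subseteq> mod_inversions k B'"
    using transpose_class_neighbours_less[of _ _ k x] mem same_class x(2)
    by (auto simp: mod_inversions_def \<sigma>_def)
  moreover have "inj_on (map_prod \<sigma> \<sigma>) ?R"
    unfolding \<sigma>_def by (rule inj_on_subset[OF prod.inj_map[OF inj_transpose inj_transpose]]) simp
  ultimately have "card ?R \<le> card (mod_inversions k B')"
    using card_inj_on_le finite_mod_inversions fin by (metis B'_def finite_Diff finite_insert)
  moreover have "card (mod_inversions k B) \<le> card ?R + 1"
    by (simp add: card_Diff_singleton_if) arith
  ultimately show ?thesis by (simp add: B'_def)
qed

lemma Sum_ge_triangular_plus_mod_inversions: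
  fixes B :: "nat set"
  assumes "finite B" "0 < k"
  shows "(\<Sum>i<card B. i) + k * card (mod_inversions k B) \<le> \<Sum>B"
  using assms(1)
proof (induction "\<Sum>B" arbitrary: B rule: less_induct)
  case less
  show ?case
  proof (cases "mod_inversions k B = {}")
    case True
    then show ?thesis using sum_lessThan_card_le_Sum[OF less.prems] by simp
  next
    case False
    then obtain y z where "(y, z) \<in> mod_inversions k B" by auto
    then obtain x where movable: "x \<in> movable_beads k B"
      using movable_bead_if_mod_inversion assms(2) by blast
    define B' where "B' = insert (x - k) (B - {x})"
    have x: "x \<in> B" "k \<le> x" "x - k \<notin> B" using movable by (auto simp: movable_beads_def)
    have "finite B'" using less.prems by (simp add: B'_def)
    have card_B': "card B' = card B"
      using less.prems x by (simp add: B'_def card_Diff_singleton) (metis card_gt_0_iff empty_iff Suc_pred)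
    have Sum_B': "\<Sum>B' + k = \<Sum>B"
      using less.prems x by (simp add: B'_def sum.remove[OF less.prems x(1)])
    have "(\<Sum>i<card B'. i) + k * card (mod_inversions k B') \<le> \<Sum>B'"
    proof (rule less.hyps[OF _ \<open>finite B'\<close>])
      show "\<Sum>B' < \<Sum>B" using Sum_B' assms(2) by linarith
    qed
    moreover have "k * card (mod_inversions k B) \<le> k * card (mod_inversions k B') + k"
      using mult_le_mono2[OF card_mod_inversions_move_bead[OF less.prems movable], of k]
      by (simp add: B'_def)
    ultimately show ?thesis using card_B' Sum_B' by simp
  qed
qed

section \<open>Congruent pairs of movable beads\<close>

definition congruent_pairs :: "nat \<Rightarrow> nat set \<Rightarrow> (nat \<times> nat) set" where
  "congruent_pairs k K = {(a, b). a \<in> K \<and> b \<in> K \<and> a \<le> b \<and> a mod k = b mod k}"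

definition min_congruent_pairs :: "nat \<Rightarrow> nat \<Rightarrow> nat" where
  "min_congruent_pairs k s = (\<Sum>i<s. i div k + 1)"

lemma card_congruent_pairs_movable_beads_le:
  assumes "finite B"
  shows "card (congruent_pairs k (movable_beads k B)) \<le> card (mod_inversions k B)"
proof -
  let ?f = "\<lambda>(a, b). (a - k, b)"
  have "inj_on ?f (congruent_pairs k (movable_beads k B))"
    by (auto simp: inj_on_def congruent_pairs_def movable_beads_def)
  moreover have "?f ` congruent_pairs k (movable_beads k B) \<subseteq> mod_inversions k B"
  proof clarify
    fix a b assume "(a, b) \<in> congruent_pairs k (movable_beads k B)"
    then have ab: "a \<in> B" "k \<le> a" "a - k \<notin> B" "b \<in> B" "a \<le> b" "a mod k = b mod k"
      by (auto simp: congruent_pairs_def movable_beads_def)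
    then have "a - k \<noteq> b" by auto
    moreover have "(a - k) mod k = a mod k" using ab(2) by (simp add: le_mod_geq)
    ultimately show "(a - k, b) \<in> mod_inversions k B"
      using ab by (auto simp: mod_inversions_def)
  qed
  ultimately show ?thesis
    using card_inj_on_le finite_mod_inversions[OF assms] by blast
qed

lemma large_residue_class:
  fixes K :: "nat set"
  assumes "s < card K" "0 < k"
  obtains r where "s div k < card {a \<in> K. a mod k = r}"
proof -
  have "\<exists>r. s div k < card {a \<in> K. a mod k = r}"
  proof (rule ccontr)
    assume "\<not> ?thesis"
    then have small: "card {a \<in> K. a mod k = r} \<le> s div k" for r
      by (simp add: not_less)
    have "K = (\<Union>r<k. {a \<in> K. a mod k = r})" using assms(2) by auto
    then have "card K = card (\<Union>r<k. {a \<in> K. a mod k = r})" by simp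
    also have "\<dots> \<le> (\<Sum>r<k. card {a \<in> K. a mod k = r})"
      by (rule card_UN_le) simp
    also have "\<dots> \<le> (\<Sum>r<k. s div k)"
      using small by (intro sum_mono)
    also have "\<dots> \<le> s" by simp
    finally show False using assms(1) by simp
  qed
  then show thesis using that by blast
qed

lemma finite_congruent_pairs:
  assumes "finite K"
  shows "finite (congruent_pairs k K)"
  by (rule finite_subset[of _ "K \<times> K"]) (auto simp: congruent_pairs_def assms)

lemma min_congruent_pairs_le_card_congruent_pairs:
  fixes K :: "nat set"
  assumes "finite K" "0 < k"
  shows "min_congruent_pairs k (card K) \<le> card (congruent_pairs k K)"
  using assms(1)
proof (induction "card K" arbitrary: K)
  case 0
  then show ?case by (simp add: min_congruent_pairs_def)
next
  case (Suc s)
  obtain r where r: "s div k < card {a \<in> K. a mod k = r}"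
    using large_residue_class[of s K k] Suc.hyps(2) assms(2) by (metis lessI)
  define C where "C = {a \<in> K. a mod k = r}"
  define e where "e = Max C"
  have "finite C" using Suc.prems by (simp add: C_def)
  moreover have "C \<noteq> {}" using r by (metis C_def card.empty not_less0)
  ultimately have "e \<in> C" and e_max: "\<And>a. a \<in> C \<Longrightarrow> a \<le> e" by (simp_all add: e_def)
  then have "e \<in> K" by (simp add: C_def)
  have IH: "min_congruent_pairs k s \<le> card (congruent_pairs k (K - {e}))"
    using Suc.hyps Suc.prems \<open>e \<in> K\<close> by (metis card_Diff_singleton diff_Suc_1 finite_Diff)
  have new_pairs: "congruent_pairs k (K - {e}) \<union> (\<lambda>a. (a, e)) ` C \<subseteq> congruent_pairs k K"
    using e_max \<open>e \<in> C\<close> by (auto simp: congruent_pairs_def C_def)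
  have "congruent_pairs k (K - {e}) \<inter> (\<lambda>a. (a, e)) ` C = {}"
    by (auto simp: congruent_pairs_def)
  then have "card (congruent_pairs k (K - {e})) + card C
      = card (congruent_pairs k (K - {e}) \<union> (\<lambda>a. (a, e)) ` C)"
    using Suc.prems \<open>finite C\<close>
    by (simp add: card_Un_disjoint finite_congruent_pairs card_image inj_on_def)
  also have "\<dots> \<le> card (congruent_pairs k K)"
    using new_pairs by (intro card_mono finite_congruent_pairs Suc.prems)
  finally show ?case
    using IH r Suc.hyps(2)[symmetric] by (simp add: min_congruent_pairs_def C_def)
qed

lemma min_congruent_pairs_mono:
  "u \<le> v \<Longrightarrow> min_congruent_pairs k u \<le> min_congruent_pairs k v"
  unfolding min_congruent_pairs_def by (rule sum_mono2) auto

lemma min_congruent_pairs_closed_form: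
  assumes "0 < k"
  shows "min_congruent_pairs k s + k * ((s div k + 1) choose 2) = s * (s div k + 1)"
proof (induction s)
  case 0
  then show ?case by (simp add: min_congruent_pairs_def)
next
  case (Suc s)
  define q where "q = s div k"
  have IH: "min_congruent_pairs k s + k * (Suc q choose 2) = s * Suc q"
    using Suc.IH by (simp add: q_def)
  have step: "min_congruent_pairs k (Suc s) = min_congruent_pairs k s + Suc q"
    by (simp add: min_congruent_pairs_def q_def)
  show ?case
  proof (cases "Suc s mod k = 0")
    case True
    then have q': "Suc s div k = Suc q" by (simp add: div_Suc q_def)
    have "Suc s = k * Suc q"
      using True q' div_mult_mod_eq[of "Suc s" k] by (simp add: mult.commute)
    have "Suc (Suc q) choose 2 = Suc q + (Suc q choose 2)"
      by (simp add: numeral_2_eq_2)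
    then have "min_congruent_pairs k (Suc s) + k * ((Suc s div k + 1) choose 2)
        = (min_congruent_pairs k s + k * (Suc q choose 2)) + Suc q + k * Suc q"
      using step q' by (simp add: algebra_simps)
    also have "\<dots> = Suc s * Suc q + k * Suc q"
      using IH by simp
    also have "\<dots> = Suc s * Suc q + Suc s"
      using \<open>Suc s = k * Suc q\<close> by simp
    finally show ?thesis using q' by simp
  next
    case False
    then have "Suc s div k = q" by (simp add: div_Suc q_def)
    then show ?thesis using step IH by simp
  qed
qed

lemma t_eq_min_congruent_pairs:
  assumes "0 < k"
  shows "t s k = int (k * min_congruent_pairs k s)"
proof -
  have "int (k * min_congruent_pairs k s) + int k ^ 2 * int ((s div k + 1) choose 2)
      = int s * (int (s div k) + 1) * int k"
    using arg_cong[OF min_congruent_pairs_closed_form[OF assms, of s], of "\<lambda>x. int (k * x)"]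
    by (simp add: algebra_simps power2_eq_square)
  then show ?thesis unfolding t_def by (simp add: mult.commute)
qed

section \<open>Beta-sets of partitions\<close>

lemma sorted_wrt_ge_nth_antimono:
  fixes xs :: "'a::preorder list"
  assumes "sorted_wrt (\<ge>) xs" "i \<le> i'" "i' < length xs"
  shows "xs ! i' \<le> xs ! i"
  using assms by (cases "i = i'") (auto simp: sorted_wrt_iff_nth_less)

lemma downward_closed_eq_lessThan_card:
  fixes S :: "nat set"
  assumes "finite S" and down: "\<And>x y. x \<in> S \<Longrightarrow> y \<le> x \<Longrightarrow> y \<in> S"
  shows "S = {..<card S}"
proof -
  have "S \<subseteq> {..<card S}"
  proof
    fix x assume "x \<in> S"
    then have "card {..x} \<le> card S" using down assms(1) by (intro card_mono) auto
    then show "x \<in> {..<card S}" by simp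
  qed
  then show ?thesis using card_subset_eq[of "{..<card S}" S] by simp
qed

definition column_rows :: "nat list \<Rightarrow> nat \<Rightarrow> nat set" where
  "column_rows lam j = {i. i < length lam \<and> j < lam ! i}"

text \<open>\<open>beta lam i\<close> is the hook length of the first cell of row \<open>i\<close>, and \<open>beta_set lam\<close> is the
  beta-set of the partition.\<close>

definition beta :: "nat list \<Rightarrow> nat \<Rightarrow> nat" where
  "beta lam i = lam ! i + (length lam - 1 - i)"

definition beta_set :: "nat list \<Rightarrow> nat set" where
  "beta_set lam = beta lam ` {..<length lam}"

lemma lessThan_card_column_rows_iff:
  assumes "sorted_wrt (\<ge>) lam"
  shows "a < card (column_rows lam j) \<longleftrightarrow> a < length lam \<and> j < lam ! a"
proof -
  have "column_rows lam j = {..<card (column_rows lam j)}"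
  proof (rule downward_closed_eq_lessThan_card)
    show "finite (column_rows lam j)" by (simp add: column_rows_def)
    fix x y assume "x \<in> column_rows lam j" "y \<le> x"
    then show "y \<in> column_rows lam j"
      using sorted_wrt_ge_nth_antimono[OF assms, of y x] by (auto simp: column_rows_def)
  qed
  then show ?thesis by (metis (mono_tags, lifting) column_rows_def lessThan_iff mem_Collect_eq)
qed

lemma card_column_rows_le_length: "card (column_rows lam j) \<le> length lam"
  using card_mono[of "{..<length lam}" "column_rows lam j"] by (auto simp: column_rows_def)

lemma card_column_rows_antimono:
  "j \<le> j' \<Longrightarrow> card (column_rows lam j') \<le> card (column_rows lam j)"
  by (rule card_mono) (auto simp: column_rows_def)

lemma hook_length_eq:
  assumes sorted: "sorted_wrt (\<ge>) lam" and cell: "i < length lam" "j < lam ! i"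
  shows "hook_length lam (i, j) + i + j + 1 = card (column_rows lam j) + lam ! i"
proof -
  define c where "c = card (column_rows lam j)"
  have below: "a < length lam \<and> j < lam ! a \<longleftrightarrow> a < c" for a
    using lessThan_card_column_rows_iff[OF sorted] by (simp add: c_def)
  have "i < c" using below cell by blast
  define arm where "arm = (\<lambda>b. (i, b)) ` {j<..<lam ! i}"
  define leg where "leg = (\<lambda>a. (a, j)) ` {i<..<c}"
  have "{v \<in> young_diagram lam. v = (i, j) \<or> (snd v = j \<and> fst v > i) \<or> (fst v = i \<and> snd v > j)}
      = insert (i, j) (leg \<union> arm)" (is "?hook = _")
  proof (rule set_eqI)
    fix v :: "nat \<times> nat"
    obtain a b' where v: "v = (a, b')" by fastforce
    show "v \<in> ?hook \<longleftrightarrow> v \<in> insert (i, j) (leg \<union> arm)"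
      using below[of a] cell \<open>i < c\<close> unfolding v leg_def arm_def young_diagram_def by auto
  qed
  moreover have "card leg = c - Suc i" "card arm = lam ! i - Suc j"
    by (simp_all add: leg_def arm_def card_image inj_on_def)
  moreover have "leg \<inter> arm = {}" "(i, j) \<notin> leg \<union> arm"
    by (auto simp: leg_def arm_def)
  ultimately have "hook_length lam (i, j) = Suc (c - Suc i + (lam ! i - Suc j))"
    by (simp add: hook_length_def card_Un_disjoint leg_def arm_def)
  then show ?thesis using \<open>i < c\<close> cell by (simp add: c_def)
qed

lemma hook_length_strict_antimono_row:
  assumes "sorted_wrt (\<ge>) lam" "i < length lam" "j < j'" "j' < lam ! i"
  shows "hook_length lam (i, j') < hook_length lam (i, j)"
  using hook_length_eq[OF assms(1,2), of j] hook_length_eq[OF assms(1,2,4)]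
    card_column_rows_antimono[of j j' lam] assms(3,4) by simp

lemma beta_strict_antimono:
  assumes "sorted_wrt (\<ge>) lam" "i < i'" "i' < length lam"
  shows "beta lam i' < beta lam i"
  using sorted_wrt_ge_nth_antimono[OF assms(1), of i i'] assms by (simp add: beta_def)

lemma inj_on_beta:
  assumes "sorted_wrt (\<ge>) lam"
  shows "inj_on (beta lam) {..<length lam}"
  by (rule inj_onI) (metis beta_strict_antimono[OF assms] lessThan_iff less_irrefl nat_neq_iff)

lemma card_beta_set:
  assumes "sorted_wrt (\<ge>) lam"
  shows "card (beta_set lam) = length lam"
  using card_image[OF inj_on_beta[OF assms]] by (simp add: beta_set_def)

lemma Sum_beta_set:
  assumes "sorted_wrt (\<ge>) lam"
  shows "\<Sum>(beta_set lam) = sum_list lam + (\<Sum>i<length lam. i)"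
proof -
  have "\<Sum>(beta_set lam) = (\<Sum>i<length lam. beta lam i)"
    using sum.reindex[OF inj_on_beta[OF assms], of id] by (simp add: beta_set_def)
  also have "\<dots> = (\<Sum>i<length lam. lam ! i) + (\<Sum>i<length lam. length lam - 1 - i)"
    unfolding beta_def by (rule sum.distrib)
  also have "(\<Sum>i<length lam. length lam - 1 - i) = (\<Sum>i<length lam. i)"
    using sum.nat_diff_reindex[of "\<lambda>i. i" "length lam"] by simp
  also have "(\<Sum>i<length lam. lam ! i) = sum_list lam"
    by (simp add: sum_list_sum_nth atLeast0LessThan)
  finally show ?thesis .
qed

lemma beta_mem_movable_beads:
  assumes sorted: "sorted_wrt (\<ge>) lam"
    and cell: "(i, j) \<in> young_diagram lam" and hook: "hook_length lam (i, j) = k"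
  shows "beta lam i \<in> movable_beads k (beta_set lam)"
proof -
  define c where "c = card (column_rows lam j)"
  have i: "i < length lam" "j < lam ! i" using cell by (auto simp: young_diagram_def)
  have c: "c \<le> length lam" by (simp add: c_def card_column_rows_le_length)
  have k: "k + i + j + 1 = c + lam ! i" using hook_length_eq[OF sorted i] hook by (simp add: c_def)
  have "k \<le> beta lam i" and below: "beta lam i - k = length lam + j - c"
    using i c k by (simp_all add: beta_def)
  moreover have "beta lam i - k \<notin> beta_set lam"
  proof
    assume "beta lam i - k \<in> beta_set lam"
    then obtain i' where i': "i' < length lam" "beta lam i' = length lam + j - c"
      using below by (auto simp: beta_set_def)
    then have "lam ! i' + c = i' + j + 1" using c by (simp add: beta_def)
    moreover have "i' < c \<longleftrightarrow> j < lam ! i'"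
      using lessThan_card_column_rows_iff[OF sorted] i' by (simp add: c_def)
    ultimately show False by linarith
  qed
  moreover have "beta lam i \<in> beta_set lam" using i by (simp add: beta_set_def)
  ultimately show ?thesis by (simp add: movable_beads_def)
qed

lemma alpha_le_card_movable_beads:
  assumes sorted: "sorted_wrt (\<ge>) lam"
  shows "alpha k lam \<le> card (movable_beads k (beta_set lam))"
proof -
  let ?cells = "{u \<in> young_diagram lam. hook_length lam u = k}"
  have "(beta lam \<circ> fst) ` ?cells \<subseteq> movable_beads k (beta_set lam)"
    using beta_mem_movable_beads[OF sorted] by fastforce
  moreover have "inj_on (beta lam \<circ> fst) ?cells"
  proof (rule inj_onI)
    fix u u' assume u: "u \<in> ?cells" "u' \<in> ?cells" "(beta lam \<circ> fst) u = (beta lam \<circ> fst) u'"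
    obtain i j i' j' where uu': "u = (i, j)" "u' = (i', j')" by fastforce
    have cells: "i < length lam" "j < lam ! i" "i' < length lam" "j' < lam ! i'"
      and hooks: "hook_length lam (i, j) = k" "hook_length lam (i', j') = k"
      using u uu' by (auto simp: young_diagram_def)
    have "i = i'" using u uu' cells inj_on_beta[OF sorted] by (auto simp: inj_on_def)
    moreover have "\<not> j < j'" "\<not> j' < j"
      using hook_length_strict_antimono_row[OF sorted] cells hooks \<open>i = i'\<close> by fastforce+
    ultimately show "u = u'" using uu' by simp
  qed
  moreover have "finite (movable_beads k (beta_set lam))"
    by (simp add: movable_beads_def beta_set_def)
  ultimately show ?thesis unfolding alpha_def using card_inj_on_le by blast
qed

section \<open>The bound on \<open>b(n, k)\<close>\<close>

lemma partition_size_ge: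
  assumes "is_partition_of n lam" "0 < k"
  shows "k * min_congruent_pairs k (alpha k lam) \<le> n"
proof -
  have sorted: "sorted_wrt (\<ge>) lam" and "sum_list lam = n"
    using assms(1) by (auto simp: is_partition_of_def)
  let ?B = "beta_set lam"
  have "finite ?B" by (simp add: beta_set_def)
  then have "finite (movable_beads k ?B)" by (simp add: movable_beads_def)
  have "min_congruent_pairs k (alpha k lam) \<le> min_congruent_pairs k (card (movable_beads k ?B))"
    using alpha_le_card_movable_beads[OF sorted] by (rule min_congruent_pairs_mono)
  also have "\<dots> \<le> card (congruent_pairs k (movable_beads k ?B))"
    using \<open>finite (movable_beads k ?B)\<close> assms(2) by (rule min_congruent_pairs_le_card_congruent_pairs)
  also have "\<dots> \<le> card (mod_inversions k ?B)"
    using \<open>finite ?B\<close> by (rule card_congruent_pairs_movable_beads_le)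
  finally have "k * min_congruent_pairs k (alpha k lam) \<le> k * card (mod_inversions k ?B)"
    by simp
  also have "\<dots> \<le> n"
    using Sum_ge_triangular_plus_mod_inversions[OF \<open>finite ?B\<close> assms(2)]
      Sum_beta_set[OF sorted] card_beta_set[OF sorted] \<open>sum_list lam = n\<close> by simp
  finally show ?thesis .
qed

lemma length_le_sum_list: "0 \<notin> set xs \<Longrightarrow> length xs \<le> sum_list (xs :: nat list)"
  by (induction xs) (auto simp: Suc_le_eq)

lemma finite_partitions_of: "finite (partitions_of n)"
proof (rule finite_subset)
  show "partitions_of n \<subseteq> {xs. set xs \<subseteq> {..n} \<and> length xs \<le> n}"
    using length_le_sum_list member_le_sum_list
    by (fastforce simp: partitions_of_def is_partition_of_def)
  show "finite {xs. set xs \<subseteq> {..n} \<and> length xs \<le> n}"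
    by (rule finite_lists_length_le) simp
qed

lemma replicate_one_mem_partitions_of: "replicate n 1 \<in> partitions_of n"
  by (induction n) (auto simp: partitions_of_def is_partition_of_def)

theorem corollary3p3:
  fixes m k n :: nat
  assumes "k \<ge> 1"
    and "int n < t (m + 1) k"
  shows "b n k \<le> m"
proof -
  have "alpha k lam \<le> m" if "lam \<in> partitions_of n" for lam
  proof (rule ccontr)
    assume "\<not> alpha k lam \<le> m"
    then have "k * min_congruent_pairs k (m + 1) \<le> k * min_congruent_pairs k (alpha k lam)"
      by (simp add: min_congruent_pairs_mono)
    also have "\<dots> \<le> n"
      using partition_size_ge that assms(1) by (simp add: partitions_of_def)
    finally have "int (k * min_congruent_pairs k (m + 1)) \<le> int n"
      by (simp only: of_nat_le_iff)
    then show False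
      using assms t_eq_min_congruent_pairs[of k "m + 1"] by simp
  qed
  moreover have "finite (alpha k ` partitions_of n)" "alpha k ` partitions_of n \<noteq> {}"
    using finite_partitions_of replicate_one_mem_partitions_of by auto
  ultimately show ?thesis by (simp add: b_def)
qed

end
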